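(* Let \(A\) be a geometrically fast set of positive bumps with a fixed marking witnessing this. If \(\mathtt{w}\) is an \(A\)-word and \(x\in J(\mathtt{w})\), then \(\mathtt{w}\) is locally reduced at \(x\) if and only if \(\mathtt{w}\) is freely reduced and \(\operatorname{dest}(a)\subseteq\operatorname{supt}(b)\) whenever \(\mathtt{ab}\) are consecutive symbols in \(\mathtt{w}\). In particular, if \(\mathtt{w}\) is freely reduced and locally reduced at some element of \(J(\mathtt{w})\), then \(\mathtt{w}\) is locally reduced at every element of \(J(\mathtt{w})\).
   Context: \(I=[0,1]\); homeomorphisms act on the right. A positive bump is an element of \(\operatorname{Homeo}_+(I)\) whose support \(\{t:ta\neq t\}\) is a single open interval \((x,y)\) on which \(ta>t\); \(x\), \(y\) are its left and right transition points. \(A\) is geometrically proper if no point is a left transition point of two distinct elements, nor a right transition point of two distinct elements. A marking assigns each \(a\in A\) a marker \(t\in\operatorname{supt}(a)\); for \(a\) with support \((x,y)\), \(\operatorname{src}(a)=(x,t)\), \(\operatorname{dest}(a)=[ta,y)\), \(\operatorname{src}(a^{-1})=\operatorname{dest}(a)\), \(\operatorname{dest}(a^{-1})=\operatorname{src}(a)\). \(A\) is geometrically fast if geometrically proper and the marking makes these feet pairwise disjoint. \(A^{\pm}=A\cup A^{-1}\); \(\operatorname{supt}(a^{-1})=\operatorname{supt}(a)\). An \(A\)-word is a finite string over \(A^{\pm}\), with evaluation \(w\). \(\mathtt{w}\) is locally reduced at \(t\) if it is freely reduced and for every prefix \(\mathtt{ua}\) (\(a\in A^\pm\)), \(tua\neq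 tu\). For a nonempty word with first symbol \(a\), \(J(\mathtt{w}):=\operatorname{supt}(a)\setminus\operatorname{src}(a)\). *)

theory Defs
  imports "HOL-Analysis.Analysis"
begin

text \<open>Homeomorphisms of I = [0,1] are modelled as functions real => real;
they act on the right, so t.a is written a t and t.(ab) = b (a t).\<close>

definition homeo_plus :: "(real \<Rightarrow> real) \<Rightarrow> bool" where
  "homeo_plus f \<longleftrightarrow> (\<exists>g. homeomorphism {0..1} {0..1} f g) \<and> strict_mono_on {0..1} f"

definition supt :: "(real \<Rightarrow> real) \<Rightarrow> real set" where
  "supt f = {t \<in> {0..1}. f t \<noteq> t}"

definition positive_bump :: "(real \<Rightarrow> real) \<Rightarrow> bool" where
  "positive_bump a \<longleftrightarrow> homeo_plus a \<and>
     (\<exists>x y. x < y \<and> supt a = {x<..<y} \<and> (\<forall>t\<in>{x<..<y}. a t > t))"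

definition ltp :: "(real \<Rightarrow> real) \<Rightarrow> real" where "ltp a = Inf (supt a)"
definition rtp :: "(real \<Rightarrow> real) \<Rightarrow> real" where "rtp a = Sup (supt a)"

definition geom_proper :: "(real \<Rightarrow> real) set \<Rightarrow> bool" where
  "geom_proper A \<longleftrightarrow> (\<forall>a\<in>A. \<forall>b\<in>A. a \<noteq> b \<longrightarrow> ltp a \<noteq> ltp b \<and> rtp a \<noteq> rtp b)"

definition src_b :: "((real \<Rightarrow> real) \<Rightarrow> real) \<Rightarrow> (real \<Rightarrow> real) \<Rightarrow> real set" where
  "src_b m a = {ltp a <..< m a}"
definition dest_b :: "((real \<Rightarrow> real) \<Rightarrow> real) \<Rightarrow> (real \<Rightarrow> real) \<Rightarrow> real set" where
  "dest_b m a = {a (m a) ..< rtp a}"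

definition marking :: "(real \<Rightarrow> real) set \<Rightarrow> ((real \<Rightarrow> real) \<Rightarrow> real) \<Rightarrow> bool" where
  "marking A m \<longleftrightarrow> (\<forall>a\<in>A. m a \<in> supt a)"

definition geom_fast_with :: "(real \<Rightarrow> real) set \<Rightarrow> ((real \<Rightarrow> real) \<Rightarrow> real) \<Rightarrow> bool" where
  "geom_fast_with A m \<longleftrightarrow> (\<forall>a\<in>A. positive_bump a) \<and> geom_proper A \<and> marking A m \<and>
     (\<forall>a\<in>A. src_b m a \<inter> dest_b m a = {}) \<and>
     (\<forall>a\<in>A. \<forall>b\<in>A. a \<noteq> b \<longrightarrow>
        src_b m a \<inter> src_b m b = {} \<and> dest_b m a \<inter> dest_b m b = {} \<and> src_b m a \<inter> dest_b m b = {})"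

text \<open>Symbols of A^{\<pm>}: (a, True) is a, (a, False) is a^{-1}.\<close>
type_synonym sym = "(real \<Rightarrow> real) \<times> bool"

definition sym_eval :: "sym \<Rightarrow> real \<Rightarrow> real" where
  "sym_eval s t = (if snd s then fst s t else inv_into {0..1} (fst s) t)"

definition sym_supt :: "sym \<Rightarrow> real set" where "sym_supt s = supt (fst s)"

definition sym_src :: "((real \<Rightarrow> real) \<Rightarrow> real) \<Rightarrow> sym \<Rightarrow> real set" where
  "sym_src m s = (if snd s then src_b m (fst s) else dest_b m (fst s))"
definition sym_dest :: "((real \<Rightarrow> real) \<Rightarrow> real) \<Rightarrow> sym \<Rightarrow> real set" where
  "sym_dest m s = (if snd s then dest_b m (fst s) else src_b m (fst s))"

definition is_A_word :: "(real \<Rightarrow> real) set \<Rightarrow> sym list \<Rightarrow> bool" where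
  "is_A_word A w \<longleftrightarrow> (\<forall>s\<in>set w. fst s \<in> A)"

definition act :: "real \<Rightarrow> sym list \<Rightarrow> real" where
  "act t w = foldl (\<lambda>x s. sym_eval s x) t w"

definition freely_reduced :: "sym list \<Rightarrow> bool" where
  "freely_reduced w \<longleftrightarrow> (\<forall>i. Suc i < length w \<longrightarrow>
      \<not> (fst (w ! i) = fst (w ! Suc i) \<and> snd (w ! i) \<noteq> snd (w ! Suc i)))"

definition locally_reduced_at :: "real \<Rightarrow> sym list \<Rightarrow> bool" where
  "locally_reduced_at t w \<longleftrightarrow> freely_reduced w \<and>
     (\<forall>u s. (\<exists>v. u @ s # v = w) \<longrightarrow> act t (u @ [s]) \<noteq> act t u)"

definition J :: "((real \<Rightarrow> real) \<Rightarrow> real) \<Rightarrow> sym list \<Rightarrow> real set" where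
  "J m w = (case w of [] \<Rightarrow> {} | s # _ \<Rightarrow> sym_supt s - sym_src m s)"

end

theory Submission
  imports Defs
begin

text \<open>Ping-pong. A point x of J(w) lies in the support but not in the source of the first
  symbol, so that symbol sends it into its destination. If the current point lies in the
  destination of a symbol, it is outside the source of the next one (the feet are disjoint and w
  is freely reduced), so the next symbol moves it iff it lies in that symbol's support, and then
  sends it into its destination again. Finally a destination is an interval missing both feet of
  every other bump, and these feet sit at the two ends of that bump's support: if it meets the
  support it is contained in it. So local reducedness at x only depends on the word.\<close>

lemma supt_subset_unit: "supt a \<subseteq> {0..1}"
  unfolding supt_def by auto

lemma fixed_outside_supt: "t \<in> {0..1} \<Longrightarrow> t \<notin> supt a \<Longrightarrow> a t = t"
  unfolding supt_def by auto

lemma positive_bump_supt: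
  assumes "positive_bump a"
  shows "supt a = {ltp a<..<rtp a}" and "ltp a < rtp a" and "t \<in> supt a \<Longrightarrow> t < a t"
proof -
  obtain x y where xy: "x < y" "supt a = {x<..<y}" "\<forall>t\<in>{x<..<y}. t < a t"
    using assms unfolding positive_bump_def by blast
  moreover have "ltp a = x" "rtp a = y"
    unfolding ltp_def rtp_def using xy by simp_all
  ultimately show "supt a = {ltp a<..<rtp a}" "ltp a < rtp a" "t \<in> supt a \<Longrightarrow> t < a t"
    by auto
qed

lemma positive_bump_homeo:
  assumes "positive_bump a"
  shows "a ` {0..1} = {0..1}" and "strict_mono_on {0..1} a"
  using assms homeomorphism_image1
  unfolding positive_bump_def homeo_plus_def by blast+

lemma positive_bump_transition_points:
  assumes "positive_bump a"
  shows "ltp a \<in> {0..1}" "rtp a \<in> {0..1}" "a (ltp a) = ltp a" "a (rtp a) = rtp a"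
proof -
  have "{ltp a<..<rtp a} \<subseteq> {0..1}"
    using supt_subset_unit[of a] positive_bump_supt(1)[OF assms] by simp
  then have "0 \<le> ltp a \<and> rtp a \<le> 1"
    using positive_bump_supt(2)[OF assms] by (simp add: greaterThanLessThan_subseteq_atLeastAtMost_iff)
  then show lr: "ltp a \<in> {0..1}" "rtp a \<in> {0..1}"
    using positive_bump_supt(2)[OF assms] by auto
  show "a (ltp a) = ltp a" "a (rtp a) = rtp a"
    using fixed_outside_supt[OF lr(1)] fixed_outside_supt[OF lr(2)] positive_bump_supt(1)[OF assms]
    by auto
qed

lemma positive_bump_marker_bounds:
  assumes "positive_bump a" "m a \<in> supt a"
  shows "ltp a < m a" "m a < a (m a)" "a (m a) < rtp a"
proof -
  show "ltp a < m a" "m a < a (m a)"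
    using assms positive_bump_supt[OF assms(1)] by auto
  have "m a \<in> {0..1}" "m a < rtp a"
    using assms supt_subset_unit[of a] positive_bump_supt(1)[OF assms(1)] by auto
  then show "a (m a) < rtp a"
    using positive_bump_homeo(2)[OF assms(1)] positive_bump_transition_points[OF assms(1)]
    by (metis strict_mono_onD)
qed

lemma sym_eval_in_unit:
  assumes "positive_bump (fst s)" "t \<in> {0..1}"
  shows "sym_eval s t \<in> {0..1}"
proof -
  have "t \<in> fst s ` {0..1}" using assms(2) positive_bump_homeo(1)[OF assms(1)] by simp
  then have "inv_into {0..1} (fst s) t \<in> {0..1}" by (rule inv_into_into)
  moreover have "fst s t \<in> {0..1}" using assms(2) positive_bump_homeo(1)[OF assms(1)] by auto
  ultimately show ?thesis unfolding sym_eval_def by simp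
qed

lemma sym_eval_moves_iff:
  assumes "positive_bump (fst s)" "t \<in> {0..1}"
  shows "sym_eval s t \<noteq> t \<longleftrightarrow> t \<in> sym_supt s"
proof (cases "snd s")
  case True
  then show ?thesis using assms(2) unfolding sym_eval_def sym_supt_def supt_def by simp
next
  case False
  let ?a = "fst s" and ?t' = "inv_into {0..1} (fst s) t"
  have "t \<in> ?a ` {0..1}" using positive_bump_homeo(1)[OF assms(1)] assms(2) by simp
  then have t': "?a ?t' = t" by (rule f_inv_into_f)
  have "?t' = t \<longleftrightarrow> t \<notin> supt ?a"
  proof
    assume "?t' = t"
    then show "t \<notin> supt ?a" using t' unfolding supt_def by simp
  next
    assume "t \<notin> supt ?a"
    then have "?a t = t" using fixed_outside_supt assms(2) by blast
    then show "?t' = t"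
      using inv_into_f_f[OF strict_mono_on_imp_inj_on[OF positive_bump_homeo(2)[OF assms(1)]] assms(2)]
      by simp
  qed
  then show ?thesis using False unfolding sym_eval_def sym_supt_def by simp
qed

lemma sym_eval_ping:
  assumes "positive_bump (fst s)" "m (fst s) \<in> supt (fst s)" "t \<in> sym_supt s - sym_src m s"
  shows "sym_eval s t \<in> sym_dest m s"
proof -
  let ?a = "fst s"
  have mono: "strict_mono_on {0..1} ?a" by (rule positive_bump_homeo(2)[OF assms(1)])
  note ends = positive_bump_transition_points[OF assms(1)]
  have t: "ltp ?a < t" "t < rtp ?a"
    using assms(3) positive_bump_supt(1)[OF assms(1)] unfolding sym_supt_def by auto
  have unit: "t \<in> {0..1}" "m ?a \<in> {0..1}"
    using assms(2,3) supt_subset_unit[of ?a] unfolding sym_supt_def by auto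
  show ?thesis
  proof (cases "snd s")
    case True
    then have "m ?a \<le> t" using assms(3) t unfolding sym_src_def src_b_def by auto
    then have "?a (m ?a) \<le> ?a t" using strict_mono_on_leD[OF mono unit(2,1)] by blast
    moreover have "?a t < rtp ?a" using strict_mono_onD[OF mono unit(1) ends(2) t(2)] ends(4) by simp
    ultimately show ?thesis using True unfolding sym_eval_def sym_dest_def dest_b_def by simp
  next
    case False
    then have t_lt: "t < ?a (m ?a)" using assms(3) t unfolding sym_src_def dest_b_def by auto
    let ?t' = "inv_into {0..1} ?a t"
    have "t \<in> ?a ` {0..1}" using positive_bump_homeo(1)[OF assms(1)] unit(1) by simp
    then have t': "?t' \<in> {0..1}" "?a ?t' = t" by (rule inv_into_into, rule f_inv_into_f)
    have "\<not> ?t' \<le> ltp ?a"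
      using strict_mono_on_less_eq[OF mono t'(1) ends(1)] t'(2) ends(3) t(1) by auto
    moreover have "\<not> m ?a \<le> ?t'"
      using strict_mono_on_less_eq[OF mono unit(2) t'(1)] t'(2) t_lt by auto
    ultimately have "ltp ?a < ?t'" "?t' < m ?a" by auto
    then show ?thesis using False unfolding sym_eval_def sym_dest_def src_b_def by simp
  qed
qed

lemma interval_subset_between_feet:
  fixes I :: "real set"
  assumes "is_interval I" "e \<in> I" "l < e" "e < r" "l < p" "q < r"
    and "I \<inter> {l<..<p} = {}" "I \<inter> {q..<r} = {}"
  shows "I \<subseteq> {l<..<r}"
proof
  fix d assume d: "d \<in> I"
  show "d \<in> {l<..<r}"
  proof (rule ccontr)
    assume "d \<notin> {l<..<r}"
    then consider "d \<le> l" | "r \<le> d" by fastforce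
    then show False
    proof cases
      case 1
      define x where "x = (l + min e p) / 2"
      have "x \<in> I" using mem_is_interval_1_I[OF assms(1) d assms(2)] 1 assms(3,5)
        unfolding x_def by auto
      moreover have "x \<in> {l<..<p}" using assms(3,5) unfolding x_def by auto
      ultimately show False using assms(7) by blast
    next
      case 2
      define x where "x = (max e q + r) / 2"
      have "x \<in> I" using mem_is_interval_1_I[OF assms(1) assms(2) d] 2 assms(4,6)
        unfolding x_def by auto
      moreover have "x \<in> {q..<r}" using assms(4,6) unfolding x_def by auto
      ultimately show False using assms(8) by blast
    qed
  qed
qed

lemma sym_dest_subset_own_supt:
  assumes "positive_bump (fst s)" "m (fst s) \<in> supt (fst s)"
  shows "sym_dest m s \<subseteq> sym_supt s"
proof -
  have "src_b m (fst s) \<subseteq> supt (fst s)" "dest_b m (fst s) \<subseteq> supt (fst s)"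
    using positive_bump_marker_bounds[where m = m, OF assms] positive_bump_supt(1)[OF assms(1)]
    unfolding src_b_def dest_b_def by (simp_all add: subset_iff)
  then show ?thesis unfolding sym_dest_def sym_supt_def by simp
qed

lemma act_append_sym: "act t (u @ [s]) = sym_eval s (act t u)"
  unfolding act_def by simp

lemma act_take_Suc: "k < length w \<Longrightarrow> act t (take (Suc k) w) = sym_eval (w ! k) (act t (take k w))"
  by (simp add: take_Suc_conv_app_nth act_append_sym)

lemma act_in_unit:
  assumes "\<forall>s\<in>set w. positive_bump (fst s)" "t \<in> {0..1}"
  shows "act t w \<in> {0..1}"
  using assms(1)
proof (induction w rule: rev_induct)
  case Nil
  then show ?case using assms(2) by (simp add: act_def)
next
  case (snoc s w)
  then show ?case using sym_eval_in_unit[of s "act t w"] by (simp add: act_append_sym)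
qed

lemma all_splits_iff_all_nth:
  "(\<forall>u s. (\<exists>v. u @ s # v = w) \<longrightarrow> P u s) \<longleftrightarrow> (\<forall>k<length w. P (take k w) (w ! k))"
proof
  assume splits: "\<forall>u s. (\<exists>v. u @ s # v = w) \<longrightarrow> P u s"
  show "\<forall>k<length w. P (take k w) (w ! k)"
  proof (intro allI impI)
    fix k assume "k < length w"
    then have "take k w @ w ! k # drop (Suc k) w = w" by (rule id_take_nth_drop[symmetric])
    then show "P (take k w) (w ! k)" using splits by blast
  qed
next
  assume nth: "\<forall>k<length w. P (take k w) (w ! k)"
  show "\<forall>u s. (\<exists>v. u @ s # v = w) \<longrightarrow> P u s"
  proof (intro allI impI)
    fix u s assume "\<exists>v. u @ s # v = w"
    then have "length u < length w" "take (length u) w = u" "w ! length u = s" by auto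
    then show "P u s" using nth by metis
  qed
qed

lemma locally_reduced_at_iff_prefix_supt:
  assumes "\<forall>s\<in>set w. positive_bump (fst s)" "t \<in> {0..1}"
  shows "locally_reduced_at t w \<longleftrightarrow>
    freely_reduced w \<and> (\<forall>k<length w. act t (take k w) \<in> sym_supt (w ! k))"
proof -
  have "act t (take k w @ [w ! k]) \<noteq> act t (take k w) \<longleftrightarrow> act t (take k w) \<in> sym_supt (w ! k)"
    if "k < length w" for k
  proof -
    have "\<forall>s\<in>set (take k w). positive_bump (fst s)" using assms(1) by (meson in_set_takeD)
    then have unit: "act t (take k w) \<in> {0..1}" by (rule act_in_unit[OF _ assms(2)])
    have "positive_bump (fst (w ! k))" using assms(1) nth_mem[OF that] by blast
    from sym_eval_moves_iff[OF this unit] show ?thesis by (simp only: act_append_sym)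
  qed
  then have "(\<forall>k<length w. act t (take k w @ [w ! k]) \<noteq> act t (take k w)) \<longleftrightarrow>
      (\<forall>k<length w. act t (take k w) \<in> sym_supt (w ! k))"
    by blast
  then show ?thesis
    unfolding locally_reduced_at_def all_splits_iff_all_nth by (rule arg_cong)
qed

lemma J_memD:
  assumes "t \<in> J m w"
  shows "w \<noteq> []" "t \<in> sym_supt (w ! 0) - sym_src m (w ! 0)" "t \<in> {0..1}"
proof -
  obtain s v where w: "w = s # v" using assms by (cases w) (simp_all add: J_def)
  then have "t \<in> sym_supt s - sym_src m s" using assms by (simp add: J_def)
  then show "w \<noteq> []" "t \<in> sym_supt (w ! 0) - sym_src m (w ! 0)" "t \<in> {0..1}"
    using w supt_subset_unit[of "fst s"] unfolding sym_supt_def by auto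
qed

lemma is_interval_sym_dest: "is_interval (sym_dest m s)"
  unfolding sym_dest_def dest_b_def src_b_def by simp

locale geometrically_fast =
  fixes A :: "(real \<Rightarrow> real) set" and m :: "(real \<Rightarrow> real) \<Rightarrow> real"
  assumes geom_fast: "geom_fast_with A m"
begin

lemma positive_bump_of_mem: "a \<in> A \<Longrightarrow> positive_bump a"
  using geom_fast unfolding geom_fast_with_def by simp

lemma marker_in_supt: "a \<in> A \<Longrightarrow> m a \<in> supt a"
  using geom_fast unfolding geom_fast_with_def marking_def by simp

lemma feet_disjoint:
  assumes "a \<in> A" "b \<in> A" "a \<noteq> b"
  shows "src_b m a \<inter> src_b m b = {}" "dest_b m a \<inter> dest_b m b = {}"
    "src_b m a \<inter> dest_b m b = {}" "dest_b m a \<inter> src_b m b = {}"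
proof -
  have "\<forall>a\<in>A. \<forall>b\<in>A. a \<noteq> b \<longrightarrow>
      src_b m a \<inter> src_b m b = {} \<and> dest_b m a \<inter> dest_b m b = {} \<and> src_b m a \<inter> dest_b m b = {}"
    using geom_fast unfolding geom_fast_with_def by simp
  from this[rule_format, OF assms] this[rule_format, OF assms(2,1)] assms(3)
  show "src_b m a \<inter> src_b m b = {}" "dest_b m a \<inter> dest_b m b = {}"
    "src_b m a \<inter> dest_b m b = {}" "dest_b m a \<inter> src_b m b = {}"
    by (auto simp: Int_commute)
qed

lemma sym_dest_inter_sym_src:
  assumes "fst s \<in> A" "fst s' \<in> A" "\<not> (fst s = fst s' \<and> snd s \<noteq> snd s')"
  shows "sym_dest m s \<inter> sym_src m s' = {}"
proof (cases "fst s = fst s'")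
  case True
  then have "snd s = snd s'" using assms(3) by simp
  moreover have "src_b m (fst s) \<inter> dest_b m (fst s) = {}"
    using geom_fast assms(1) unfolding geom_fast_with_def by simp
  ultimately show ?thesis using True
    unfolding sym_dest_def sym_src_def by (auto simp: Int_commute)
next
  case False
  then show ?thesis using feet_disjoint[OF assms(1,2) False]
    unfolding sym_dest_def sym_src_def by (auto simp: Int_commute)
qed

lemma sym_dest_subset_sym_supt:
  assumes "fst s \<in> A" "fst s' \<in> A" "e \<in> sym_dest m s" "e \<in> sym_supt s'"
  shows "sym_dest m s \<subseteq> sym_supt s'"
proof (cases "fst s = fst s'")
  case True
  then show ?thesis
    using sym_dest_subset_own_supt positive_bump_of_mem marker_in_supt assms(1)
    unfolding sym_supt_def by metis
next
  case False
  let ?b = "fst s'"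
  have b: "positive_bump ?b" "m ?b \<in> supt ?b" using assms(2) positive_bump_of_mem marker_in_supt by auto
  note supt_b = positive_bump_supt(1)[OF b(1)] and bounds = positive_bump_marker_bounds[where m = m, OF b]
  note feet = feet_disjoint[OF assms(1,2) False]
  have avoid_src: "sym_dest m s \<inter> {ltp ?b<..<m ?b} = {}"
    using feet(1,4) unfolding sym_dest_def src_b_def[of m ?b, symmetric] by simp
  have avoid_dest: "sym_dest m s \<inter> {?b (m ?b)..<rtp ?b} = {}"
    using feet(2,3) unfolding sym_dest_def dest_b_def[of m ?b, symmetric] by simp
  have e: "ltp ?b < e" "e < rtp ?b" using assms(4) supt_b unfolding sym_supt_def by auto
  have "sym_dest m s \<subseteq> {ltp ?b<..<rtp ?b}"
    by (rule interval_subset_between_feet[OF is_interval_sym_dest assms(3) e bounds(1,3)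
          avoid_src avoid_dest])
  then show ?thesis using supt_b unfolding sym_supt_def by simp
qed

lemma A_word_positive_bumps: "is_A_word A w \<Longrightarrow> \<forall>s\<in>set w. positive_bump (fst s)"
  unfolding is_A_word_def using positive_bump_of_mem by blast

text \<open>The hypothesis on the orbit is what each direction of the characterisation below
  supplies: the inclusion of destinations in supports, or the fact that every symbol moves the
  current point.\<close>
lemma act_take_Suc_in_sym_dest:
  assumes w: "is_A_word A w" "freely_reduced w" and t: "t \<in> J m w"
    and next_supt: "\<And>i. Suc i < length w \<Longrightarrow> act t (take (Suc i) w) \<in> sym_dest m (w ! i) \<Longrightarrow>
        act t (take (Suc i) w) \<in> sym_supt (w ! Suc i)"
  shows "k < length w \<Longrightarrow> act t (take (Suc k) w) \<in> sym_dest m (w ! k)"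
proof (induction k)
  case 0
  have A: "fst (w ! 0) \<in> A" using w(1) J_memD(1)[OF t] unfolding is_A_word_def by simp
  show ?case
    using sym_eval_ping[where m = m, OF positive_bump_of_mem[OF A] marker_in_supt[OF A] J_memD(2)[OF t]]
      act_take_Suc[OF 0]
    by (simp add: act_def)
next
  case (Suc k)
  let ?p = "act t (take (Suc k) w)"
  have A: "fst (w ! k) \<in> A" "fst (w ! Suc k) \<in> A"
    using w(1) Suc.prems unfolding is_A_word_def by simp_all
  have "?p \<in> sym_dest m (w ! k)" using Suc by simp
  moreover have "\<not> (fst (w ! k) = fst (w ! Suc k) \<and> snd (w ! k) \<noteq> snd (w ! Suc k))"
    using w(2) Suc.prems unfolding freely_reduced_def by blast
  ultimately have "?p \<in> sym_supt (w ! Suc k) - sym_src m (w ! Suc k)"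
    using next_supt[OF Suc.prems] sym_dest_inter_sym_src[OF A] by blast
  then show ?case
    using sym_eval_ping[where m = m, OF positive_bump_of_mem[OF A(2)] marker_in_supt[OF A(2)]]
      act_take_Suc[OF Suc.prems]
    by simp
qed

lemma locally_reduced_at_iff_dest_subset_supt:
  assumes w: "is_A_word A w" and t: "t \<in> J m w"
  shows "locally_reduced_at t w \<longleftrightarrow> freely_reduced w \<and>
    (\<forall>i. Suc i < length w \<longrightarrow> sym_dest m (w ! i) \<subseteq> sym_supt (w ! Suc i))"
  unfolding locally_reduced_at_iff_prefix_supt[OF A_word_positive_bumps[OF w] J_memD(3)[OF t]]
proof (intro conj_cong refl iffI allI impI)
  assume fr: "freely_reduced w"
  {
    assume supt: "\<forall>k<length w. act t (take k w) \<in> sym_supt (w ! k)"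
    fix i assume i: "Suc i < length w"
    have A: "fst (w ! i) \<in> A" "fst (w ! Suc i) \<in> A"
      using w i unfolding is_A_word_def by simp_all
    have "act t (take (Suc i) w) \<in> sym_dest m (w ! i)"
      using act_take_Suc_in_sym_dest[OF w fr t] supt i by simp
    then show "sym_dest m (w ! i) \<subseteq> sym_supt (w ! Suc i)"
      using sym_dest_subset_sym_supt[OF A] supt i by blast
  next
    assume subset: "\<forall>i. Suc i < length w \<longrightarrow> sym_dest m (w ! i) \<subseteq> sym_supt (w ! Suc i)"
    fix k assume k: "k < length w"
    show "act t (take k w) \<in> sym_supt (w ! k)"
    proof (cases k)
      case 0
      then show ?thesis using J_memD(2)[OF t] by (simp add: act_def)
    next
      case (Suc i)
      have "act t (take (Suc j) w) \<in> sym_supt (w ! Suc j)"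
        if "Suc j < length w" "act t (take (Suc j) w) \<in> sym_dest m (w ! j)" for j
        using subset that by blast
      then have "act t (take (Suc i) w) \<in> sym_dest m (w ! i)"
        using act_take_Suc_in_sym_dest[OF w fr t] k Suc by simp
      then show ?thesis using subset k Suc by blast
    qed
  }
qed

end

theorem lemma5p3:
  fixes A :: "(real \<Rightarrow> real) set" and m :: "(real \<Rightarrow> real) \<Rightarrow> real"
  assumes "geom_fast_with A m"
  shows "(\<forall>w x. is_A_word A w \<longrightarrow> x \<in> J m w \<longrightarrow>
            (locally_reduced_at x w \<longleftrightarrow>
               freely_reduced w \<and>
               (\<forall>i. Suc i < length w \<longrightarrow> sym_dest m (w ! i) \<subseteq> sym_supt (w ! Suc i))))
       \<and> (\<forall>w. is_A_word A w \<longrightarrow> freely_reduced w \<longrightarrow>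
            (\<exists>x\<in>J m w. locally_reduced_at x w) \<longrightarrow>
            (\<forall>y\<in>J m w. locally_reduced_at y w))"
proof -
  interpret geometrically_fast A m using assms by unfold_locales
  show ?thesis using locally_reduced_at_iff_dest_subset_supt by blast
qed

end
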